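(* If $S$ is a DRC-semigroup and $p_1,\dots,p_k\in\mathbf P(S)$, then $\Theta_{p_1\cdots p_k}=\theta_{p_1}\cdots\theta_{p_k}$ and $\Delta_{p_1\cdots p_k}=\delta_{p_k}\cdots\delta_{p_1}$.
   Context: A DRC-semigroup is $(S,\cdot,D,R)$, $(S,\cdot)$ a semigroup, $D,R:S\to S$ with, for all $a,b$: $D(a)a=a$, $aR(a)=a$; $D(ab)=D(aD(b))$, $R(ab)=R(R(a)b)$; $D(ab)=D(a)D(ab)D(a)$, $R(ab)=R(b)R(ab)R(b)$; $R(D(a))=D(a)$, $D(R(a))=R(a)$. $\mathbf P(S)=\{D(a):a\in S\}$. Maps are written on the right of their arguments and composed left to right. For $p,q\in\mathbf P(S)$: $q\theta_p=R(qp)$, $q\delta_p=D(pq)$. For $a\in S$: $\Theta_a,\Delta_a:\mathbf P(S)\to\mathbf P(S)$, $p\Theta_a=R(pa)$, $p\Delta_a=D(ap)$. *)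

theory Defs
  imports Main
begin

definition drc_semigroup :: "('a::semigroup_mult \<Rightarrow> 'a) \<Rightarrow> ('a \<Rightarrow> 'a) \<Rightarrow> bool" where
  "drc_semigroup D R \<longleftrightarrow>
     (\<forall>a. D a * a = a) \<and> (\<forall>a. a * R a = a) \<and>
     (\<forall>a b. D (a * b) = D (a * D b)) \<and> (\<forall>a b. R (a * b) = R (R a * b)) \<and>
     (\<forall>a b. D (a * b) = D a * D (a * b) * D a) \<and>
     (\<forall>a b. R (a * b) = R b * R (a * b) * R b) \<and>
     (\<forall>a. R (D a) = D a) \<and> (\<forall>a. D (R a) = R a)"

definition projections :: "('a \<Rightarrow> 'a) \<Rightarrow> 'a set" where
  "projections D = range D"

definition theta :: "('a::semigroup_mult \<Rightarrow> 'a) \<Rightarrow> 'a \<Rightarrow> 'a \<Rightarrow> 'a" where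
  "theta R p q = R (q * p)"

definition delta :: "('a::semigroup_mult \<Rightarrow> 'a) \<Rightarrow> 'a \<Rightarrow> 'a \<Rightarrow> 'a" where
  "delta D p q = D (p * q)"

definition Theta :: "('a::semigroup_mult \<Rightarrow> 'a) \<Rightarrow> 'a \<Rightarrow> 'a \<Rightarrow> 'a" where
  "Theta R a p = R (p * a)"

definition Delta :: "('a::semigroup_mult \<Rightarrow> 'a) \<Rightarrow> 'a \<Rightarrow> 'a \<Rightarrow> 'a" where
  "Delta D a p = D (a * p)"

fun sprod :: "'a::semigroup_mult list \<Rightarrow> 'a" where
  "sprod [] = undefined"
| "sprod [x] = x"
| "sprod (x # y # xs) = x * sprod (y # xs)"

text \<open>Left-to-right composition: seqcomp [f1,...,fk] applies f1 first, then f2, ..., then fk.\<close>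
fun seqcomp :: "('a \<Rightarrow> 'a) list \<Rightarrow> 'a \<Rightarrow> 'a" where
  "seqcomp [] = id"
| "seqcomp (f # fs) = seqcomp fs \<circ> f"

end

theory Submission
  imports Defs
begin

text \<open>The axioms \<open>R (a * b) = R (R a * b)\<close> and \<open>D (a * b) = D (a * D b)\<close> make
  \<open>a \<mapsto> \<Theta>\<^sub>a\<close> a homomorphism and \<open>a \<mapsto> \<Delta>\<^sub>a\<close> an anti-homomorphism into the
  maps composed left to right, and \<open>\<Theta>\<^sub>p\<close>, \<open>\<Delta>\<^sub>p\<close> are \<open>\<theta>\<^sub>p\<close>, \<open>\<delta>\<^sub>p\<close> by definition;
  induction on the length of the product finishes the proof. Neither the arguments
  nor the factors need to be projections.\<close>

lemma seqcomp_append: "seqcomp (xs @ ys) = seqcomp ys \<circ> seqcomp xs"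
  by (induction xs) (auto simp: comp_assoc)

lemma theta_eq_Theta: "theta R = Theta R"
  by (simp add: fun_eq_iff theta_def Theta_def)

lemma delta_eq_Delta: "delta D = Delta D"
  by (simp add: fun_eq_iff delta_def Delta_def)

lemma Theta_mult:
  assumes "drc_semigroup D R"
  shows "Theta R (a * b) = Theta R b \<circ> Theta R a"
proof
  fix p
  have "R (p * a * b) = R (R (p * a) * b)"
    using assms by (simp add: drc_semigroup_def)
  then show "Theta R (a * b) p = (Theta R b \<circ> Theta R a) p"
    by (simp add: Theta_def mult.assoc)
qed

lemma Delta_mult:
  assumes "drc_semigroup D R"
  shows "Delta D (a * b) = Delta D a \<circ> Delta D b"
proof
  fix p
  have "D (a * (b * p)) = D (a * D (b * p))"
    using assms by (simp add: drc_semigroup_def)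
  then show "Delta D (a * b) p = (Delta D a \<circ> Delta D b) p"
    by (simp add: Delta_def mult.assoc)
qed

lemma Theta_sprod:
  assumes "drc_semigroup D R" and "ps \<noteq> []"
  shows "Theta R (sprod ps) = seqcomp (map (theta R) ps)"
  using assms(2)
proof (induction ps rule: sprod.induct)
  case (3 x y xs)
  then show ?case by (simp add: Theta_mult[OF assms(1)] theta_eq_Theta)
qed (simp_all add: theta_eq_Theta)

lemma Delta_sprod:
  assumes "drc_semigroup D R" and "ps \<noteq> []"
  shows "Delta D (sprod ps) = seqcomp (map (delta D) (rev ps))"
  using assms(2)
proof (induction ps rule: sprod.induct)
  case (3 x y xs)
  then show ?case by (simp add: Delta_mult[OF assms(1)] delta_eq_Delta seqcomp_append)
qed (simp_all add: delta_eq_Delta)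

theorem lemma8p18:
  fixes D R :: "'a::semigroup_mult \<Rightarrow> 'a" and ps :: "'a list"
  assumes "drc_semigroup D R"
    and "ps \<noteq> []"
    and "set ps \<subseteq> projections D"
  shows "(\<forall>q \<in> projections D. Theta R (sprod ps) q = seqcomp (map (theta R) ps) q)
       \<and> (\<forall>q \<in> projections D. Delta D (sprod ps) q = seqcomp (map (delta D) (rev ps)) q)"
  using Theta_sprod[OF assms(1,2)] Delta_sprod[OF assms(1,2)] by simp

end
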